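(* Let $n\ge4$, $a>1$, and let $f_a(\Gamma)$ be the closed curve parameterized for $\phi\in[0,2n\pi]$ by $$u(\phi)=-\Big(\tfrac{a+1}{n}\cos\phi-\tfrac{a+1}{n+1}\cos\big(\tfrac{n+1}{n}\phi\big)\Big)-1,\qquad v(\phi)=-\Big(\tfrac{a-1}{n}\sin\phi-\tfrac{a-1}{n+1}\sin\big(\tfrac{n+1}{n}\phi\big)\Big).$$ Then $f_a(\Gamma)$ meets the real axis to the right of its center $-1$ in exactly $\lfloor\frac{n+1}{2}\rfloor$ distinct points. If $n$ is even, each of these points is a double intersection (attained for two parameter values in $[0,2n\pi)$); if $n$ is odd, each is a double intersection except the outermost one, which is attained for exactly one parameter value ($\phi=n\pi$). *)

theory Defs
  imports Complex_Main
begin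

definition cu :: "nat \<Rightarrow> real \<Rightarrow> real \<Rightarrow> real" where
  "cu n a \<phi> = - ((a + 1) / real n * cos \<phi> - (a + 1) / (real n + 1) * cos ((real n + 1) / real n * \<phi>)) - 1"

definition cv :: "nat \<Rightarrow> real \<Rightarrow> real \<Rightarrow> real" where
  "cv n a \<phi> = - ((a - 1) / real n * sin \<phi> - (a - 1) / (real n + 1) * sin ((real n + 1) / real n * \<phi>))"

definition hit_params :: "nat \<Rightarrow> real \<Rightarrow> real \<Rightarrow> real set" where
  "hit_params n a x = {\<phi>. 0 \<le> \<phi> \<and> \<phi> < 2 * real n * pi \<and> cv n a \<phi> = 0 \<and> cu n a \<phi> = x}"

definition right_axis_points :: "nat \<Rightarrow> real \<Rightarrow> real set" where
  "right_axis_points n a = {x. x > -1 \<and> hit_params n a x \<noteq> {}}"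

end

theory Submission
  imports Defs
begin

(*
  Substituting phi = 2 n y and m = 2 n + 1 gives v = -(a-1)/(n(n+1)) F(y) and
  u = -(a+1)/(n(n+1)) H(y) - 1, where F = curve_im m and H = curve_re m.  So the
  crossings of the real axis are the zeros of F in [0, pi), and they lie right of -1
  iff H < 0.  On a zero of F, H^2 = 1 + (m^2 - 1) sin^2 y and H has the sign of
  sin (m y); as F is odd and H even about pi/2, every crossing comes from the pair
  y, pi - y with y in (0, pi/2], and distinct such y give distinct points.  Since
  F' = (m^2 - 1) sin y sin (m y), F strictly decreases and changes sign on every
  interval [k pi/m, (k+1) pi/m] with k odd, which contains exactly one zero; below
  pi/2 there are floor(n/2) such intervals.  For odd n the zero y = pi/2 (phi = n pi)
  is added; it is its own mirror image, and |H| = m is maximal there, so it gives the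
  outermost point.
*)

definition curve_im :: "real \<Rightarrow> real \<Rightarrow> real" where
  "curve_im m y = cos y * sin (m * y) - m * sin y * cos (m * y)"

definition curve_re :: "real \<Rightarrow> real \<Rightarrow> real" where
  "curve_re m y = cos (m * y) * cos y + m * sin (m * y) * sin y"

lemma cv_rescaled:
  assumes "n > 0"
  shows "cv n a (2 * real n * y) = - (a - 1) / (real n * (real n + 1)) * curve_im (2 * real n + 1) y"
proof -
  define w where "w = (2 * real n + 1) * y"
  have "(real n + 1) / real n * (2 * real n * y) = w + y" and "2 * real n * y = w - y"
    using assms by (simp_all add: w_def field_simps)
  then have "cv n a (2 * real n * y) = - ((a - 1) / real n * (sin w * cos y - cos w * sin y)
     - (a - 1) / (real n + 1) * (sin w * cos y + cos w * sin y))"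
    unfolding cv_def by (simp add: sin_add sin_diff)
  then show ?thesis
    using assms unfolding curve_im_def w_def[symmetric]
    by (simp add: divide_simps) (simp add: algebra_simps)
qed

lemma cu_rescaled:
  assumes "n > 0"
  shows "cu n a (2 * real n * y) = - ((a + 1) / (real n * (real n + 1)) * curve_re (2 * real n + 1) y) - 1"
proof -
  define w where "w = (2 * real n + 1) * y"
  have "(real n + 1) / real n * (2 * real n * y) = w + y" and "2 * real n * y = w - y"
    using assms by (simp_all add: w_def field_simps)
  then have "cu n a (2 * real n * y) = - ((a + 1) / real n * (cos w * cos y + sin w * sin y)
     - (a + 1) / (real n + 1) * (cos w * cos y - sin w * sin y)) - 1"
    unfolding cu_def by (simp add: cos_add cos_diff)
  then show ?thesis
    using assms unfolding curve_re_def w_def[symmetric]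
    by (simp add: divide_simps) (simp add: algebra_simps)
qed

lemma curve_im_sq_add_curve_re_sq:
  "(curve_im m y)\<^sup>2 + (curve_re m y)\<^sup>2 = (cos y)\<^sup>2 + m\<^sup>2 * (sin y)\<^sup>2"
proof -
  have "(curve_im m y)\<^sup>2 + (curve_re m y)\<^sup>2
      = ((cos y)\<^sup>2 + m\<^sup>2 * (sin y)\<^sup>2) * ((sin (m * y))\<^sup>2 + (cos (m * y))\<^sup>2)"
    unfolding curve_im_def curve_re_def by algebra
  then show ?thesis by simp
qed

lemma curve_re_sq_if_curve_im_zero:
  assumes "curve_im m y = 0"
  shows "(curve_re m y)\<^sup>2 = 1 + (m\<^sup>2 - 1) * (sin y)\<^sup>2"
  using curve_im_sq_add_curve_re_sq[of m y] assms cos_squared_eq[of y] by (simp add: algebra_simps)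

lemma curve_re_neg_iff_if_curve_im_zero:
  assumes "m > 0" "0 < y" "y < pi" "curve_im m y = 0"
  shows "curve_re m y < 0 \<longleftrightarrow> sin (m * y) < 0"
proof -
  have "m * sin y * cos (m * y) = cos y * sin (m * y)"
    using assms(4) by (simp add: curve_im_def)
  then have sign: "m * sin y * curve_re m y = sin (m * y) * ((cos y)\<^sup>2 + m\<^sup>2 * (sin y)\<^sup>2)"
    unfolding curve_re_def by (simp add: algebra_simps power2_eq_square)
  have "m * sin y > 0" using assms sin_gt_zero by simp
  moreover have "(cos y)\<^sup>2 + m\<^sup>2 * (sin y)\<^sup>2 > 0"
    using \<open>m * sin y > 0\<close> by (intro add_nonneg_pos) (auto simp: power_mult_distrib[symmetric])
  ultimately show ?thesis
    using sign by (metis mult_less_0_iff not_less_iff_gr_or_eq)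
qed

lemma curve_re_ge_if_curve_im_zero:
  assumes "m \<ge> 1" "curve_im m y = 0"
  shows "- m \<le> curve_re m y"
proof -
  have "(sin y)\<^sup>2 \<le> 1" and "m\<^sup>2 \<ge> 1"
    using assms(1) by (simp_all add: abs_square_le_1)
  then have "(m\<^sup>2 - 1) * (sin y)\<^sup>2 \<le> m\<^sup>2 - 1"
    by (simp add: mult_left_le)
  then have "(curve_re m y)\<^sup>2 \<le> m\<^sup>2"
    using curve_re_sq_if_curve_im_zero[OF assms(2)] by simp
  then show ?thesis
    using assms(1) abs_le_square_iff[of "curve_re m y" m] by simp
qed

lemma curve_re_eq_imp_eq_or_reflect:
  assumes "m > 1" "0 \<le> y" "y \<le> pi" "0 \<le> z" "z \<le> pi"
    and "curve_im m y = 0" "curve_im m z = 0" "curve_re m y = curve_re m z"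
  shows "y = z \<or> y = pi - z"
proof -
  have "m\<^sup>2 - 1 > 0" using assms(1) by simp
  then have "(sin y)\<^sup>2 = (sin z)\<^sup>2"
    using curve_re_sq_if_curve_im_zero[OF assms(6)] curve_re_sq_if_curve_im_zero[OF assms(7)] assms(8)
    by simp
  moreover have "sin y \<ge> 0" "sin z \<ge> 0" using assms by (auto intro: sin_ge_zero)
  ultimately have "sin y = sin z" by simp
  then have "cos y = cos z \<or> cos y = cos (pi - z)"
    by (metis cos_pi_minus cos_squared_eq power2_eq_iff)
  then show ?thesis using assms cos_inj_pi[of y z] cos_inj_pi[of y "pi - z"] by auto
qed

lemma has_real_derivative_curve_im:
  "(curve_im m has_real_derivative (m\<^sup>2 - 1) * sin y * sin (m * y)) (at y)"
  unfolding curve_im_def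
  by (rule derivative_eq_intros refl)+ (simp add: algebra_simps power2_eq_square)

lemma continuous_on_curve_im: "continuous_on A (curve_im m)"
  unfolding curve_im_def by (intro continuous_intros)

lemma curve_im_strict_decreasing:
  assumes "m > 1" "0 \<le> p" "q \<le> pi"
    and neg: "\<And>y. p < y \<Longrightarrow> y < q \<Longrightarrow> sin (m * y) < 0"
    and "p \<le> s" "s < t" "t \<le> q"
  shows "curve_im m t < curve_im m s"
proof (rule DERIV_neg_imp_decreasing_open[OF \<open>s < t\<close>])
  fix y assume "s < y" "y < t"
  then have "sin y > 0" and "sin (m * y) < 0" using assms by (auto intro: sin_gt_zero neg)
  moreover have "m\<^sup>2 - 1 > 0" using assms(1) by simp
  ultimately have "(m\<^sup>2 - 1) * sin y * sin (m * y) < 0" by (simp add: mult_pos_neg)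
  then show "\<exists>D. (curve_im m has_real_derivative D) (at y) \<and> D < 0"
    using has_real_derivative_curve_im by blast
qed (rule continuous_on_curve_im)

lemma sin_diff_npi: "sin (w - real k * pi) = (-1) ^ k * sin w"
  by (simp add: sin_diff)

lemma sin_neg_in_odd_cell:
  assumes "odd k" "real k * pi < w" "w < (real k + 1) * pi"
  shows "sin w < 0"
  using sin_diff_npi[of w k] sin_gt_zero[of "w - real k * pi"] assms by (simp add: algebra_simps)

lemma odd_cell_if_sin_neg:
  assumes "real k * pi \<le> w" "w < (real k + 1) * pi" "sin w < 0"
  shows "odd k"
  using sin_diff_npi[of w k] sin_ge_zero[of "w - real k * pi"] assms by (auto simp: algebra_simps)

lemma curve_im_at_multiple_of_pi_div:
  assumes "m \<noteq> 0"
  shows "curve_im m (real k * pi / m) = - ((-1) ^ k * m * sin (real k * pi / m))"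
  using assms by (simp add: curve_im_def)

lemma curve_im_zero_in_odd_cell_unique:
  assumes "m > 1" "odd k" "real k + 1 \<le> m"
    and "real k * pi / m \<le> y" "y \<le> (real k + 1) * pi / m"
    and "real k * pi / m \<le> z" "z \<le> (real k + 1) * pi / m"
    and "curve_im m y = 0" "curve_im m z = 0"
  shows "y = z"
proof -
  have "(real k + 1) * pi / m \<le> pi" using assms(1,3) by (simp add: divide_le_eq)
  moreover have "sin (m * x) < 0" if "real k * pi / m < x" "x < (real k + 1) * pi / m" for x
    using that assms(1,2) by (intro sin_neg_in_odd_cell) (simp_all add: field_simps)
  ultimately have "curve_im m t < curve_im m s"
    if "real k * pi / m \<le> s" "s < t" "t \<le> (real k + 1) * pi / m" for s t
    using that assms(1)
    by (intro curve_im_strict_decreasing[of m "real k * pi / m" "(real k + 1) * pi / m"]) auto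
  then show ?thesis using assms(4-) by (metis less_irrefl linorder_cases)
qed

lemma curve_im_zero_in_odd_cell_exists:
  assumes "m > 1" "odd k" "real k + 1 < m"
  obtains y where "real k * pi / m < y" "y < (real k + 1) * pi / m" "curve_im m y = 0"
proof -
  define p q where "p = real k * pi / m" and "q = (real k + 1) * pi / m"
  have "k > 0" using assms(2) by (rule odd_pos)
  then have "0 < p" "p < q" "q < pi" using assms(1,3) by (auto simp: p_def q_def divide_less_eq)
  then have "sin p > 0" "sin q > 0" by (auto intro!: sin_gt_zero)
  then have "curve_im m p > 0" "curve_im m q < 0"
    using assms(1,2) curve_im_at_multiple_of_pi_div[of m k] curve_im_at_multiple_of_pi_div[of m "k + 1"]
    by (auto simp: p_def q_def add.commute)
  then obtain y where "p \<le> y" "y \<le> q" "curve_im m y = 0"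
    using IVT2'[of "curve_im m" q 0 p] \<open>p < q\<close> by (force simp: continuous_on_curve_im)
  with \<open>curve_im m p > 0\<close> \<open>curve_im m q < 0\<close> show ?thesis
    by (intro that) (auto simp: p_def q_def order.order_iff_strict)
qed

lemma curve_im_pi_minus: "curve_im (2 * real n + 1) (pi - y) = - curve_im (2 * real n + 1) y"
proof -
  have "(2 * real n + 1) * (pi - y) = real (2 * n + 1) * pi - (2 * real n + 1) * y"
    by (simp add: algebra_simps)
  then show ?thesis
    unfolding curve_im_def by (simp only: sin_diff cos_diff sin_npi cos_npi) simp
qed

lemma curve_re_pi_minus: "curve_re (2 * real n + 1) (pi - y) = curve_re (2 * real n + 1) y"
proof -
  have "(2 * real n + 1) * (pi - y) = real (2 * n + 1) * pi - (2 * real n + 1) * y"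
    by (simp add: algebra_simps)
  then show ?thesis
    unfolding curve_re_def by (simp only: sin_diff cos_diff sin_npi cos_npi) simp
qed

lemma sin_cos_odd_mult_pi_half:
  "sin ((2 * real n + 1) * pi / 2) = (-1) ^ n" "cos ((2 * real n + 1) * pi / 2) = 0"
proof -
  have *: "(2 * real n + 1) * pi / 2 = real (Suc (2 * n)) * pi / 2"
    by simp
  show "sin ((2 * real n + 1) * pi / 2) = (-1) ^ n"
    unfolding * by (rule sin_cos_npi)
  show "cos ((2 * real n + 1) * pi / 2) = 0"
    unfolding * using cos_pi_eq_zero[of n] by (simp only: mult.commute)
qed

lemma curve_im_pi_half: "curve_im (2 * real n + 1) (pi / 2) = 0"
  by (simp add: curve_im_def sin_cos_odd_mult_pi_half)

lemma curve_re_pi_half: "curve_re (2 * real n + 1) (pi / 2) = (-1) ^ n * (2 * real n + 1)"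
  by (simp add: curve_re_def sin_cos_odd_mult_pi_half)

text \<open>The rescaled parameters y = phi / (2 n) of the crossings right of -1, folded into (0, pi/2].\<close>

definition axis_zeros :: "nat \<Rightarrow> real set" where
  "axis_zeros n = {z. 0 < z \<and> z \<le> pi / 2 \<and> curve_im (2 * real n + 1) z = 0
                      \<and> sin ((2 * real n + 1) * z) < 0}"

lemma pi_half_in_axis_zeros_iff: "pi / 2 \<in> axis_zeros n \<longleftrightarrow> odd n"
  by (simp add: axis_zeros_def curve_im_pi_half sin_cos_odd_mult_pi_half)

definition cell_index :: "nat \<Rightarrow> real \<Rightarrow> nat" where
  "cell_index n z = nat \<lfloor>(2 * real n + 1) * z / pi\<rfloor>"

lemma cell_index_of_axis_zero:
  assumes "n > 0" "z \<in> axis_zeros n" "z < pi / 2"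
  defines "k \<equiv> cell_index n z"
  shows "odd k" "k < n"
    and "real k * pi < (2 * real n + 1) * z" "(2 * real n + 1) * z < (real k + 1) * pi"
proof -
  define m where "m = 2 * real n + 1"
  have z: "0 < z" "curve_im m z = 0" "sin (m * z) < 0"
    using assms(2) by (auto simp: axis_zeros_def m_def)
  have "0 \<le> (2 * real n + 1) * z / pi" using z(1) by simp
  then have "real k \<le> (2 * real n + 1) * z / pi" "(2 * real n + 1) * z / pi < real k + 1"
    unfolding k_def cell_index_def by linarith+
  then have le: "real k * pi \<le> m * z" and less: "m * z < (real k + 1) * pi"
    by (simp_all add: m_def field_simps)
  show "odd k" using odd_cell_if_sin_neg[OF le less z(3)] .
  have "m * z \<noteq> real k * pi" using z(3) by auto
  then show "real k * pi < m * z" using le by simp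
  show "m * z < (real k + 1) * pi" by (fact less)
  have "m * z < m * (pi / 2)" using z(1) assms(3) by (simp add: m_def)
  moreover have "m * (pi / 2) < (real n + 1) * pi"
    using pi_gt_zero by (simp add: m_def algebra_simps)
  ultimately have "real k * pi < (real n + 1) * pi"
    using le by linarith
  then have "k \<le> n" by simp
  moreover have "k \<noteq> n"
  proof
    assume "k = n"
    have "z = pi / 2"
      by (rule curve_im_zero_in_odd_cell_unique[of m n])
        (use assms(1) \<open>odd k\<close> \<open>k = n\<close> le less z curve_im_pi_half[of n]
          in \<open>simp_all add: m_def field_simps\<close>)
    with assms(3) show False by simp
  qed
  ultimately show "k < n" by simp
qed

lemma inj_on_cell_index_div_2:
  assumes "n > 0"
  shows "inj_on (\<lambda>z. cell_index n z div 2) {z \<in> axis_zeros n. z < pi / 2}"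
proof (rule inj_onI)
  define m where "m = 2 * real n + 1"
  have m: "m > 1" using assms by (simp add: m_def)
  note cell = cell_index_of_axis_zero[OF assms, folded m_def]
  fix y z
  assume y: "y \<in> {z \<in> axis_zeros n. z < pi / 2}" and z: "z \<in> {z \<in> axis_zeros n. z < pi / 2}"
    and "cell_index n y div 2 = cell_index n z div 2"
  moreover have "odd (cell_index n y)" and odd: "odd (cell_index n z)"
    using y z cell(1) by auto
  ultimately have k: "cell_index n y = cell_index n z"
    by (metis odd_two_times_div_two_succ)
  have "cell_index n z < n"
    using z cell(2) by simp
  then have "real (cell_index n z) + 1 \<le> m"
    by (simp add: m_def)
  moreover have "real (cell_index n z) * pi / m \<le> x" "x \<le> (real (cell_index n z) + 1) * pi / m"
    if "x \<in> {y, z}" for x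
  proof -
    have "real (cell_index n z) * pi < m * x" "m * x < (real (cell_index n z) + 1) * pi"
      using that y z cell(3,4)[of y] cell(3,4)[of z] by (auto simp: k)
    then show "real (cell_index n z) * pi / m \<le> x" "x \<le> (real (cell_index n z) + 1) * pi / m"
      using m by (simp_all add: field_simps)
  qed
  moreover have "curve_im m y = 0" "curve_im m z = 0"
    using y z by (simp_all add: axis_zeros_def m_def)
  ultimately show "y = z"
    using curve_im_zero_in_odd_cell_unique[OF m odd] by blast
qed

lemma axis_zero_in_odd_cell_exists:
  assumes "j < n div 2"
  obtains y where "y \<in> axis_zeros n" "y < pi / 2" "cell_index n y = 2 * j + 1"
proof -
  define m where "m = 2 * real n + 1"
  have m: "m > 1" using assms by (simp add: m_def)
  have j: "real (2 * j + 1) + 1 < m" "2 * (real (2 * j + 1) + 1) \<le> m"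
    using assms by (auto simp: m_def)
  obtain y where y: "real (2 * j + 1) * pi / m < y" "y < (real (2 * j + 1) + 1) * pi / m"
    and y0: "curve_im m y = 0"
    using curve_im_zero_in_odd_cell_exists[OF m _ j(1)] by auto
  have my: "real (2 * j + 1) * pi < m * y" "m * y < (real (2 * j + 1) + 1) * pi"
    using y m by (simp_all add: field_simps)
  have "0 < real (2 * j + 1) * pi / m" using m by simp
  moreover have "2 * (real (2 * j + 1) + 1) * pi \<le> m * pi"
    using j(2) by (intro mult_right_mono) auto
  then have "(real (2 * j + 1) + 1) * pi / m \<le> pi / 2"
    using m by (simp add: field_simps)
  ultimately have "0 < y" "y < pi / 2" using y by linarith+
  moreover have "sin (m * y) < 0"
    using my by (intro sin_neg_in_odd_cell[of "2 * j + 1"]) auto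
  moreover have "cell_index n y = 2 * j + 1"
    unfolding cell_index_def m_def[symmetric] using my by (intro floor_eq4) (simp_all add: field_simps)
  ultimately show ?thesis
    using y0 by (intro that) (auto simp: axis_zeros_def m_def)
qed

lemma bij_betw_axis_zeros_below_pi_half:
  assumes "n > 0"
  shows "bij_betw (\<lambda>z. cell_index n z div 2) {z \<in> axis_zeros n. z < pi / 2} {..< n div 2}"
proof -
  have "(\<lambda>z. cell_index n z div 2) ` {z \<in> axis_zeros n. z < pi / 2} \<subseteq> {..< n div 2}"
  proof
    fix j assume "j \<in> (\<lambda>z. cell_index n z div 2) ` {z \<in> axis_zeros n. z < pi / 2}"
    then obtain z where "z \<in> axis_zeros n" "z < pi / 2" and j: "j = cell_index n z div 2"
      by auto
    then have "odd (cell_index n z)" "cell_index n z < n"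
      using cell_index_of_axis_zero[OF assms] by auto
    then show "j \<in> {..< n div 2}"
      unfolding j by simp presburger
  qed
  moreover have "{..< n div 2} \<subseteq> (\<lambda>z. cell_index n z div 2) ` {z \<in> axis_zeros n. z < pi / 2}"
  proof
    fix j assume "j \<in> {..< n div 2}"
    then obtain y where "y \<in> axis_zeros n" "y < pi / 2" "cell_index n y = 2 * j + 1"
      using axis_zero_in_odd_cell_exists by blast
    then show "j \<in> (\<lambda>z. cell_index n z div 2) ` {z \<in> axis_zeros n. z < pi / 2}"
      by (intro image_eqI[of _ _ y]) auto
  qed
  ultimately show ?thesis
    using inj_on_cell_index_div_2[OF assms] by (auto simp: bij_betw_def)
qed

lemma finite_card_axis_zeros:
  assumes "n > 0"
  shows "finite (axis_zeros n)" "card (axis_zeros n) = (n + 1) div 2"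
proof -
  let ?below = "{z \<in> axis_zeros n. z < pi / 2}"
  note bij = bij_betw_axis_zeros_below_pi_half[OF assms]
  have below: "finite ?below" "card ?below = n div 2"
    using bij_betw_finite[OF bij] bij_betw_same_card[OF bij] by simp_all
  have "axis_zeros n = ?below \<union> (axis_zeros n \<inter> {pi / 2})"
    by (auto simp: axis_zeros_def)
  then have split: "axis_zeros n = ?below \<union> (if odd n then {pi / 2} else {})"
    using pi_half_in_axis_zeros_iff[of n] by auto
  show "finite (axis_zeros n)"
    using below(1) by (subst split) simp
  show "card (axis_zeros n) = (n + 1) div 2"
    using below by (subst split) (auto elim: oddE)
qed

lemma cv_rescaled_eq_0_iff:
  assumes "n > 0" "a > 1"
  shows "cv n a (2 * real n * y) = 0 \<longleftrightarrow> curve_im (2 * real n + 1) y = 0"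
  using assms by (simp add: cv_rescaled)

lemma cu_rescaled_affine:
  assumes "n > 0" "a > 1"
  obtains c where "c > 0" "\<And>y. cu n a (2 * real n * y) = - (c * curve_re (2 * real n + 1) y) - 1"
proof
  show "(a + 1) / (real n * (real n + 1)) > 0" using assms by simp
qed (rule cu_rescaled[OF assms(1)])

lemma cu_rescaled_le_iff:
  assumes "n > 0" "a > 1"
  shows "cu n a (2 * real n * y) \<le> cu n a (2 * real n * z)
           \<longleftrightarrow> curve_re (2 * real n + 1) z \<le> curve_re (2 * real n + 1) y"
proof -
  obtain c where "c > 0" and cu: "\<And>y. cu n a (2 * real n * y) = - (c * curve_re (2 * real n + 1) y) - 1"
    using cu_rescaled_affine[OF assms] by blast
  then show ?thesis by (simp add: cu mult_le_cancel_left_pos)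
qed

lemma cu_rescaled_eq_iff:
  assumes "n > 0" "a > 1"
  shows "cu n a (2 * real n * y) = cu n a (2 * real n * z)
           \<longleftrightarrow> curve_re (2 * real n + 1) y = curve_re (2 * real n + 1) z"
  using cu_rescaled_le_iff[OF assms, of y z] cu_rescaled_le_iff[OF assms, of z y] by auto

lemma cu_rescaled_gt_iff:
  assumes "n > 0" "a > 1"
  shows "-1 < cu n a (2 * real n * y) \<longleftrightarrow> curve_re (2 * real n + 1) y < 0"
proof -
  obtain c where "c > 0" and cu: "\<And>y. cu n a (2 * real n * y) = - (c * curve_re (2 * real n + 1) y) - 1"
    using cu_rescaled_affine[OF assms] by blast
  then show ?thesis by (simp add: cu mult_less_0_iff)
qed

lemma hit_params_rescaled:
  assumes "n > 0" "a > 1"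
  shows "hit_params n a x = (\<lambda>y. 2 * real n * y) `
           {y. 0 \<le> y \<and> y < pi \<and> curve_im (2 * real n + 1) y = 0 \<and> cu n a (2 * real n * y) = x}"
proof (intro equalityI subsetI)
  fix \<phi> assume "\<phi> \<in> hit_params n a x"
  moreover have "\<phi> = 2 * real n * (\<phi> / (2 * real n))" using assms(1) by simp
  ultimately show "\<phi> \<in> (\<lambda>y. 2 * real n * y) `
           {y. 0 \<le> y \<and> y < pi \<and> curve_im (2 * real n + 1) y = 0 \<and> cu n a (2 * real n * y) = x}"
    using cv_rescaled_eq_0_iff[OF assms, of "\<phi> / (2 * real n)"] assms(1)
    by (intro image_eqI[of _ _ "\<phi> / (2 * real n)"]) (auto simp: hit_params_def field_simps)
qed (use assms cv_rescaled_eq_0_iff in \<open>auto simp: hit_params_def\<close>)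

lemma hit_params_at_crossing:
  assumes "n > 0" "a > 1" "0 < z" "z \<le> pi / 2" "curve_im (2 * real n + 1) z = 0"
  shows "hit_params n a (cu n a (2 * real n * z)) = {2 * real n * z, 2 * real n * (pi - z)}"
proof -
  let ?m = "2 * real n + 1"
  have "{y. 0 \<le> y \<and> y < pi \<and> curve_im ?m y = 0 \<and> curve_re ?m y = curve_re ?m z} = {z, pi - z}"
  proof (intro equalityI subsetI)
    fix y assume "y \<in> {y. 0 \<le> y \<and> y < pi \<and> curve_im ?m y = 0 \<and> curve_re ?m y = curve_re ?m z}"
    then show "y \<in> {z, pi - z}"
      using assms curve_re_eq_imp_eq_or_reflect[of ?m y z] by auto
  qed (use assms curve_im_pi_minus curve_re_pi_minus in auto)
  then show ?thesis
    unfolding hit_params_rescaled[OF assms(1,2)] cu_rescaled_eq_iff[OF assms(1,2)] by simp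
qed

lemma right_axis_points_eq_image_axis_zeros:
  assumes "n > 0" "a > 1"
  shows "right_axis_points n a = (\<lambda>z. cu n a (2 * real n * z)) ` axis_zeros n"
proof (intro equalityI subsetI)
  let ?m = "2 * real n + 1"
  fix x assume "x \<in> right_axis_points n a"
  then obtain y where y: "0 \<le> y" "y < pi" "curve_im ?m y = 0" "cu n a (2 * real n * y) = x"
    and "x > -1"
    unfolding right_axis_points_def hit_params_rescaled[OF assms] by auto
  then have re: "curve_re ?m y < 0"
    using cu_rescaled_gt_iff[OF assms] by blast
  then have "y > 0"
    using y(1) by (cases "y = 0") (auto simp: curve_re_def)
  define z where "z = (if y \<le> pi / 2 then y else pi - y)"
  have "0 < z" "z \<le> pi / 2" "z < pi"
    using y \<open>y > 0\<close> by (auto simp: z_def)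
  moreover have "curve_im ?m z = 0" and re_z: "curve_re ?m z = curve_re ?m y"
    using y curve_im_pi_minus curve_re_pi_minus by (auto simp: z_def)
  ultimately have "z \<in> axis_zeros n"
    using re curve_re_neg_iff_if_curve_im_zero[of ?m z] by (simp add: axis_zeros_def)
  moreover have "cu n a (2 * real n * z) = x"
    using y(4) re_z cu_rescaled_eq_iff[OF assms] by metis
  ultimately show "x \<in> (\<lambda>z. cu n a (2 * real n * z)) ` axis_zeros n"
    by blast
next
  fix x assume "x \<in> (\<lambda>z. cu n a (2 * real n * z)) ` axis_zeros n"
  then obtain z where z: "z \<in> axis_zeros n" and x: "x = cu n a (2 * real n * z)" by blast
  then have "0 < z" "z \<le> pi / 2" "curve_im (2 * real n + 1) z = 0" "curve_re (2 * real n + 1) z < 0"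
    using curve_re_neg_iff_if_curve_im_zero[of "2 * real n + 1" z] pi_gt_zero
    by (auto simp: axis_zeros_def)
  then show "x \<in> right_axis_points n a"
    using hit_params_at_crossing[OF assms] cu_rescaled_gt_iff[OF assms] x
    by (auto simp: right_axis_points_def)
qed

lemma inj_on_cu_axis_zeros:
  assumes "n > 0" "a > 1"
  shows "inj_on (\<lambda>z. cu n a (2 * real n * z)) (axis_zeros n)"
proof (rule inj_onI)
  fix y z assume "y \<in> axis_zeros n" "z \<in> axis_zeros n"
    and "cu n a (2 * real n * y) = cu n a (2 * real n * z)"
  then show "y = z"
    using curve_re_eq_imp_eq_or_reflect[of "2 * real n + 1" y z] assms
    by (auto simp: axis_zeros_def cu_rescaled_eq_iff)
qed

lemma card_hit_params_axis_zero:
  assumes "n > 0" "a > 1" "z \<in> axis_zeros n" "z \<noteq> pi / 2"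
  shows "card (hit_params n a (cu n a (2 * real n * z))) = 2"
  using assms hit_params_at_crossing[OF assms(1,2), of z] by (auto simp: axis_zeros_def)

lemma Max_right_axis_points:
  assumes "n > 0" "a > 1" "odd n"
  shows "Max (right_axis_points n a) = cu n a (real n * pi)"
proof -
  let ?m = "2 * real n + 1"
  have "pi / 2 \<in> axis_zeros n"
    using assms(3) pi_half_in_axis_zeros_iff by blast
  moreover have "cu n a (2 * real n * z) \<le> cu n a (2 * real n * (pi / 2))" if "z \<in> axis_zeros n" for z
    unfolding cu_rescaled_le_iff[OF assms(1,2)]
    using that assms(3) curve_re_ge_if_curve_im_zero[of ?m z] curve_re_pi_half[of n]
    by (simp add: axis_zeros_def)
  ultimately show ?thesis
    unfolding right_axis_points_eq_image_axis_zeros[OF assms(1,2)]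
    using finite_card_axis_zeros(1)[OF assms(1)]
    by (intro Max_eqI) (auto intro!: image_eqI[of _ _ "pi / 2"])
qed

theorem lemma5:
  fixes n :: nat and a :: real
  assumes "n \<ge> 4" and "a > 1"
  shows "finite (right_axis_points n a)
     \<and> card (right_axis_points n a) = (n + 1) div 2
     \<and> (even n \<longrightarrow> (\<forall>x \<in> right_axis_points n a. card (hit_params n a x) = 2))
     \<and> (odd n \<longrightarrow>
          (\<forall>x \<in> right_axis_points n a. x \<noteq> Max (right_axis_points n a) \<longrightarrow> card (hit_params n a x) = 2)
          \<and> hit_params n a (Max (right_axis_points n a)) = {real n * pi})"
proof -
  have n: "n > 0" using assms(1) by simp
  note image = right_axis_points_eq_image_axis_zeros[OF n assms(2)]
  note card_hit = card_hit_params_axis_zero[OF n assms(2)]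
  have "finite (right_axis_points n a)" "card (right_axis_points n a) = (n + 1) div 2"
    unfolding image using finite_card_axis_zeros[OF n] card_image[OF inj_on_cu_axis_zeros[OF n assms(2)]]
    by simp_all
  moreover have "card (hit_params n a x) = 2" if "even n" "x \<in> right_axis_points n a" for x
    using that card_hit pi_half_in_axis_zeros_iff[of n] unfolding image by fastforce
  moreover have "card (hit_params n a x) = 2"
    if "odd n" "x \<in> right_axis_points n a" "x \<noteq> Max (right_axis_points n a)" for x
    using that card_hit Max_right_axis_points[OF n assms(2)] unfolding image by fastforce
  moreover have "hit_params n a (Max (right_axis_points n a)) = {real n * pi}" if "odd n"
    using hit_params_at_crossing[OF n assms(2), of "pi / 2"] Max_right_axis_points[OF n assms(2) that]
      curve_im_pi_half[of n] by simp
  ultimately show ?thesis by blast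
qed

end
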